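(* Let $\overline{C}(\alpha,N)$ be as defined in the context. Then: (1) For real $0\le\alpha\le2$ and integers $N\ge2$, $\overline{C}(\alpha,N)=\overline{C}(2-\alpha,N)\ge1$. (2) For real $0\le\alpha_1<\alpha_2\le2$, $0<\theta<1$ and positive integers $N$, $\overline{C}(\theta\alpha_1+(1-\theta)\alpha_2,N)\le\overline{C}(\alpha_1,N)^{\theta}\,\overline{C}(\alpha_2,N)^{1-\theta}$. (3) For real $0\le\alpha_1<\alpha_2\le1$ and positive integers $N$, $\overline{C}(\alpha_1,N)\ge\overline{C}(\alpha_2,N)$. (4) For real $0\le\alpha<\tfrac12$ there is a constant $c_\alpha>0$ such that $\overline{C}(\alpha,N)\ge c_\alpha N^{\frac12-\alpha}$ for all integers $N\ge2$.
   Context: For a strictly increasing sequence $(\lambda_k)_{k=-\infty}^{\infty}$ of real numbers, put $\delta_k:=\min\{\lambda_k-\lambda_{k-1},\lambda_{k+1}-\lambda_k\}$. For $0\le\alpha\le2$ and a positive integer $N$, let $\overline{C}(\alpha,N)$ be the minimum of all constants $C(\alpha,N)$ such that $$\sum_{m=1}^N\sum_{\substack{n=1\\ n\ne m}}^N\frac{\delta_m^{2-\alpha}\delta_n^{\alpha}t_mt_n}{(\lambda_m-\lambda_n)^2}\le C(\alpha,N)\sum_{n=1}^N t_n^2$$ holds for every strictly increasing real sequence $(\lambda_k)_{k\in\mathbb Z}$ and all nonnegative reals $t_1,\dots,t_N$. *)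

theory Defs
  imports Complex_Main
begin

definition gap :: "(int \<Rightarrow> real) \<Rightarrow> int \<Rightarrow> real" where
  "gap lam k = min (lam k - lam (k - 1)) (lam (k + 1) - lam k)"

definition admissible_const :: "real \<Rightarrow> nat \<Rightarrow> real \<Rightarrow> bool" where
  "admissible_const \<alpha> N C \<longleftrightarrow>
     (\<forall>(lam :: int \<Rightarrow> real) (t :: int \<Rightarrow> real).
        strict_mono lam \<longrightarrow> (\<forall>n\<in>{1..int N}. 0 \<le> t n) \<longrightarrow>
        (\<Sum>m\<in>{1..int N}. \<Sum>n\<in>{1..int N}-{m}.
            gap lam m powr (2 - \<alpha>) * gap lam n powr \<alpha> * t m * t n / (lam m - lam n)^2)
        \<le> C * (\<Sum>n\<in>{1..int N}. (t n)^2))"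

definition Cbar :: "real \<Rightarrow> nat \<Rightarrow> real" where
  "Cbar \<alpha> N = Inf {C. admissible_const \<alpha> N C}"

end

theory Submission
  imports Defs "HOL-Analysis.Convex"
begin

text \<open>Exchanging \<open>m\<close> and \<open>n\<close> turns the form for \<open>\<alpha>\<close> into the form for \<open>2 - \<alpha>\<close>, whence the
  symmetry. Each summand is log-linear in \<open>\<alpha>\<close>, so Hoelder's inequality makes
  \<open>\<alpha> \<mapsto> log (Cbar \<alpha> N)\<close> convex; together with the symmetry this forces monotonicity on
  \<open>[0, 1]\<close>. The lower bounds come from test configurations: \<open>\<lambda>\<^sub>k = k\<close> with \<open>t\<close> the indicator
  of \<open>{1, 2}\<close> gives \<open>Cbar \<ge> 1\<close>, and \<open>N - 1\<close> unit-spaced points followed by a point of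
  gap \<open>N\<close> carrying the weight \<open>\<surd>N\<close> give \<open>Cbar \<ge> N powr (1/2 - \<alpha>) / 16\<close>.\<close>

definition qterm :: "real \<Rightarrow> (int \<Rightarrow> real) \<Rightarrow> (int \<Rightarrow> real) \<Rightarrow> int \<Rightarrow> int \<Rightarrow> real" where
  "qterm \<alpha> lam t m n = gap lam m powr (2 - \<alpha>) * gap lam n powr \<alpha> * t m * t n / (lam m - lam n)^2"

definition offdiag :: "nat \<Rightarrow> (int \<times> int) set" where
  "offdiag N = Sigma {1..int N} (\<lambda>m. {1..int N} - {m})"

definition qform :: "real \<Rightarrow> nat \<Rightarrow> (int \<Rightarrow> real) \<Rightarrow> (int \<Rightarrow> real) \<Rightarrow> real" where
  "qform \<alpha> N lam t = (\<Sum>(m, n)\<in>offdiag N. qterm \<alpha> lam t m n)"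

definition sqnorm :: "nat \<Rightarrow> (int \<Rightarrow> real) \<Rightarrow> real" where
  "sqnorm N t = (\<Sum>n\<in>{1..int N}. (t n)^2)"

lemma finite_offdiag [simp]: "finite (offdiag N)"
  by (simp add: offdiag_def)

lemma swap_image_offdiag: "prod.swap ` offdiag N = offdiag N"
  by (auto simp: offdiag_def image_iff)

lemma admissible_const_iff:
  "admissible_const \<alpha> N C \<longleftrightarrow>
     (\<forall>lam t. strict_mono lam \<longrightarrow> (\<forall>n\<in>{1..int N}. 0 \<le> t n) \<longrightarrow> qform \<alpha> N lam t \<le> C * sqnorm N t)"
  unfolding admissible_const_def qform_def offdiag_def sqnorm_def qterm_def
  by (simp add: sum.Sigma split_beta)

lemma gap_pos: "strict_mono lam \<Longrightarrow> 0 < gap lam k"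
  unfolding gap_def by (simp add: strict_mono_less)

lemma gap_le_dist:
  assumes "strict_mono lam" "n \<noteq> m"
  shows "gap lam m \<le> \<bar>lam m - lam n\<bar>"
proof (cases "n < m")
  case True
  then have "lam n \<le> lam (m - 1)" "lam n < lam m"
    using assms(1) by (simp_all add: strict_mono_less_eq strict_mono_less)
  then show ?thesis unfolding gap_def by auto
next
  case False
  with assms(2) have "m < n" by simp
  then have "lam (m + 1) \<le> lam n" "lam m < lam n"
    using assms(1) by (simp_all add: strict_mono_less_eq strict_mono_less)
  then show ?thesis unfolding gap_def by auto
qed

lemma qterm_nonneg: "0 \<le> t m \<Longrightarrow> 0 \<le> t n \<Longrightarrow> 0 \<le> qterm \<alpha> lam t m n"
  unfolding qterm_def by simp

lemma qterm_reflect: "qterm (2 - \<alpha>) lam t n m = qterm \<alpha> lam t m n"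
  unfolding qterm_def by (simp add: power2_commute)

lemma qterm_le_mult:
  assumes "strict_mono lam" "n \<noteq> m" "0 \<le> \<alpha>" "\<alpha> \<le> 2" "0 \<le> t m" "0 \<le> t n"
  shows "qterm \<alpha> lam t m n \<le> t m * t n"
proof -
  define d where "d = \<bar>lam m - lam n\<bar>"
  have "d > 0" unfolding d_def using assms(1,2) strict_mono_eq[OF assms(1)] by auto
  have "gap lam m powr (2 - \<alpha>) * gap lam n powr \<alpha> \<le> d powr (2 - \<alpha>) * d powr \<alpha>"
    using gap_le_dist[OF assms(1,2)] gap_le_dist[OF assms(1), of m n] assms(2-4)
      gap_pos[OF assms(1)] unfolding d_def
    by (intro mult_mono powr_mono2) (auto simp: less_imp_le abs_minus_commute)
  also have "\<dots> = d powr 2"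
    by (simp flip: powr_add)
  also have "\<dots> = d\<^sup>2"
    using \<open>d > 0\<close> by (simp add: powr_realpow)
  finally have "gap lam m powr (2 - \<alpha>) * gap lam n powr \<alpha> * (t m * t n) \<le> d\<^sup>2 * (t m * t n)"
    using assms(5,6) by (intro mult_right_mono) auto
  then show ?thesis
    using \<open>d > 0\<close> unfolding qterm_def d_def by (simp add: field_simps)
qed

lemma qterm_log_linear:
  assumes "strict_mono lam" "0 \<le> t m" "0 \<le> t n"
  shows "qterm (\<theta> * \<alpha>1 + (1 - \<theta>) * \<alpha>2) lam t m n
           = qterm \<alpha>1 lam t m n powr \<theta> * qterm \<alpha>2 lam t m n powr (1 - \<theta>)"
proof -
  define a b w where "a = gap lam m" and "b = gap lam n" and "w = t m * t n / (lam m - lam n)^2"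
  have "a > 0" "b > 0" "w \<ge> 0"
    unfolding a_def b_def w_def using gap_pos[OF assms(1)] assms(2,3) by auto
  have qterm_abw: "qterm \<beta> lam t m n = a powr (2 - \<beta>) * b powr \<beta> * w" for \<beta>
    unfolding qterm_def a_def b_def w_def by simp
  have "qterm \<alpha>1 lam t m n powr \<theta> * qterm \<alpha>2 lam t m n powr (1 - \<theta>)
     = (a powr ((2 - \<alpha>1) * \<theta>) * a powr ((2 - \<alpha>2) * (1 - \<theta>)))
       * (b powr (\<alpha>1 * \<theta>) * b powr (\<alpha>2 * (1 - \<theta>))) * (w powr \<theta> * w powr (1 - \<theta>))"
    unfolding qterm_abw using \<open>a > 0\<close> \<open>b > 0\<close> \<open>w \<ge> 0\<close> by (simp add: powr_mult powr_powr)
  also have "\<dots> = a powr (2 - (\<theta> * \<alpha>1 + (1 - \<theta>) * \<alpha>2)) * b powr (\<theta> * \<alpha>1 + (1 - \<theta>) * \<alpha>2) * w powr 1"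
    by (simp only: powr_add[symmetric]) (simp add: algebra_simps)
  finally show ?thesis using \<open>w \<ge> 0\<close> qterm_abw by simp
qed

lemma qform_nonneg: "(\<forall>n\<in>{1..int N}. 0 \<le> t n) \<Longrightarrow> 0 \<le> qform \<alpha> N lam t"
  unfolding qform_def offdiag_def by (intro sum_nonneg) (auto intro!: qterm_nonneg)

lemma qform_reflect: "qform (2 - \<alpha>) N lam t = qform \<alpha> N lam t"
proof -
  have "qform (2 - \<alpha>) N lam t = (\<Sum>p\<in>prod.swap ` offdiag N. qterm (2 - \<alpha>) lam t (fst p) (snd p))"
    unfolding qform_def swap_image_offdiag by (simp add: split_beta)
  also have "\<dots> = (\<Sum>(m, n)\<in>offdiag N. qterm (2 - \<alpha>) lam t n m)"
    by (subst sum.reindex) (auto simp: split_beta)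
  also have "\<dots> = qform \<alpha> N lam t"
    unfolding qform_def qterm_reflect ..
  finally show ?thesis .
qed

lemma sqnorm_nonneg: "0 \<le> sqnorm N t"
  unfolding sqnorm_def by (simp add: sum_nonneg)

lemma admissible_const_real_N:
  assumes "0 \<le> \<alpha>" "\<alpha> \<le> 2"
  shows "admissible_const \<alpha> N (real N)"
  unfolding admissible_const_iff
proof (intro allI impI)
  fix lam t :: "int \<Rightarrow> real"
  assume lam: "strict_mono lam" and t: "\<forall>n\<in>{1..int N}. 0 \<le> t n"
  let ?A = "{1..int N}"
  have "qform \<alpha> N lam t \<le> (\<Sum>(m, n)\<in>offdiag N. ((t m)^2 + (t n)^2) / 2)"
    unfolding qform_def split_beta
  proof (intro sum_mono)
    fix p assume "p \<in> offdiag N"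
    then have "qterm \<alpha> lam t (fst p) (snd p) \<le> t (fst p) * t (snd p)"
      using t by (intro qterm_le_mult[OF lam _ assms]) (auto simp: offdiag_def)
    also have "\<dots> \<le> ((t (fst p))^2 + (t (snd p))^2) / 2"
      using sum_squares_bound[of "t (fst p)" "t (snd p)"] by (simp add: power2_eq_square)
    finally show "qterm \<alpha> lam t (fst p) (snd p) \<le> ((t (fst p))^2 + (t (snd p))^2) / 2" .
  qed
  also have "\<dots> = (\<Sum>m\<in>?A. \<Sum>n\<in>?A - {m}. ((t m)^2 + (t n)^2) / 2)"
    unfolding offdiag_def by (simp add: sum.Sigma)
  also have "\<dots> \<le> (\<Sum>m\<in>?A. \<Sum>n\<in>?A. ((t m)^2 + (t n)^2) / 2)"
    by (intro sum_mono sum_mono2) auto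
  also have "\<dots> = real N * sqnorm N t"
    unfolding sqnorm_def
    by (simp add: sum.distrib add_divide_distrib sum_divide_distrib[symmetric] sum_distrib_left[symmetric])
  finally show "qform \<alpha> N lam t \<le> real N * sqnorm N t" .
qed

lemma admissible_const_nonneg:
  assumes "admissible_const \<alpha> N C" "N \<ge> 1"
  shows "0 \<le> C"
proof -
  define t :: "int \<Rightarrow> real" where "t = (\<lambda>n. if n = 1 then 1 else 0)"
  have "strict_mono real_of_int"
    by (simp add: strict_mono_def)
  then have "qform \<alpha> N real_of_int t \<le> C * sqnorm N t"
    using assms(1) unfolding admissible_const_iff by (simp add: t_def)
  moreover have "qform \<alpha> N real_of_int t = 0"
    unfolding qform_def offdiag_def by (intro sum.neutral ballI) (auto simp: qterm_def t_def split: if_splits)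
  moreover have "sqnorm N t = (\<Sum>n\<in>{1..int N}. if n = 1 then 1 else 0)"
    unfolding sqnorm_def t_def by (intro sum.cong) auto
  then have "sqnorm N t = 1"
    using assms(2) by simp
  ultimately show ?thesis by simp
qed

lemma Cbar_le_admissible:
  assumes "admissible_const \<alpha> N C" "N \<ge> 1"
  shows "Cbar \<alpha> N \<le> C"
  unfolding Cbar_def using assms admissible_const_nonneg
  by (intro cInf_lower) (auto simp: bdd_below_def)

lemma Cbar_admissible:
  assumes "0 \<le> \<alpha>" "\<alpha> \<le> 2"
  shows "admissible_const \<alpha> N (Cbar \<alpha> N)"
  unfolding admissible_const_iff
proof (intro allI impI)
  fix lam t :: "int \<Rightarrow> real"
  assume lam: "strict_mono lam" and t: "\<forall>n\<in>{1..int N}. 0 \<le> t n"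
  show "qform \<alpha> N lam t \<le> Cbar \<alpha> N * sqnorm N t"
  proof (cases "sqnorm N t = 0")
    case True
    then have "\<forall>n\<in>{1..int N}. t n = 0"
      unfolding sqnorm_def by (simp add: sum_nonneg_eq_0_iff)
    then have "qform \<alpha> N lam t = 0"
      unfolding qform_def offdiag_def qterm_def by (intro sum.neutral ballI) auto
    with True show ?thesis by simp
  next
    case False
    then have S: "sqnorm N t > 0" using sqnorm_nonneg less_eq_real_def by auto
    have "qform \<alpha> N lam t / sqnorm N t \<le> Cbar \<alpha> N"
      unfolding Cbar_def
    proof (rule cInf_greatest)
      show "{C. admissible_const \<alpha> N C} \<noteq> {}"
        using admissible_const_real_N[OF assms] by auto
      fix C assume "C \<in> {C. admissible_const \<alpha> N C}"
      then have "qform \<alpha> N lam t \<le> C * sqnorm N t"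
        using lam t unfolding admissible_const_iff by auto
      then show "qform \<alpha> N lam t / sqnorm N t \<le> C" using S by (simp add: divide_le_eq)
    qed
    then show ?thesis using S by (simp add: divide_le_eq)
  qed
qed

lemma Cbar_nonneg: "0 \<le> \<alpha> \<Longrightarrow> \<alpha> \<le> 2 \<Longrightarrow> N \<ge> 1 \<Longrightarrow> 0 \<le> Cbar \<alpha> N"
  using Cbar_admissible admissible_const_nonneg by blast

lemma Cbar_reflect: "Cbar (2 - \<alpha>) N = Cbar \<alpha> N"
  unfolding Cbar_def admissible_const_iff qform_reflect ..

lemma Cbar_ge_one:
  assumes "0 \<le> \<alpha>" "\<alpha> \<le> 2" "N \<ge> 2"
  shows "1 \<le> Cbar \<alpha> N"
proof -
  define t :: "int \<Rightarrow> real" where "t = (\<lambda>n. if n \<in> {1, 2} then 1 else 0)"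
  have sub: "{(1, 2), (2, 1)} \<subseteq> offdiag N"
    using assms(3) by (auto simp: offdiag_def)
  have gap1: "gap real_of_int k = 1" for k
    unfolding gap_def by simp
  have t_nonneg: "0 \<le> t n" for n
    unfolding t_def by simp
  have "2 = (\<Sum>(m, n)\<in>{(1, 2), (2, 1)}. qterm \<alpha> real_of_int t m n)"
    by (simp add: qterm_def gap1 t_def)
  also have "\<dots> \<le> qform \<alpha> N real_of_int t"
    unfolding qform_def using sub by (intro sum_mono2) (auto intro!: qterm_nonneg t_nonneg)
  also have "\<dots> \<le> Cbar \<alpha> N * sqnorm N t"
    using Cbar_admissible[OF assms(1,2)] unfolding admissible_const_iff
    by (simp add: strict_mono_def t_def)
  also have "sqnorm N t = (\<Sum>n\<in>{1..int N}. if n \<in> {1, 2} then 1 else 0)"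
    unfolding sqnorm_def t_def by (intro sum.cong) auto
  also have "\<dots> = card ({1..int N} \<inter> {1, 2})"
    by (simp add: sum.If_cases Collect_disj_eq insert_commute)
  also have "{1..int N} \<inter> {1, 2} = {1, 2}"
    using assms(3) by auto
  finally show ?thesis by simp
qed

lemma Holder_ineq_sum:
  fixes x y :: "'a \<Rightarrow> real"
  assumes "finite I" "\<And>i. i \<in> I \<Longrightarrow> 0 \<le> x i" "\<And>i. i \<in> I \<Longrightarrow> 0 \<le> y i" "0 < \<theta>" "\<theta> < 1"
  shows "(\<Sum>i\<in>I. x i powr \<theta> * y i powr (1 - \<theta>)) \<le> (\<Sum>i\<in>I. x i) powr \<theta> * (\<Sum>i\<in>I. y i) powr (1 - \<theta>)"
proof -
  define X Y where "X = (\<Sum>i\<in>I. x i)" and "Y = (\<Sum>i\<in>I. y i)"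
  have "X \<ge> 0" "Y \<ge> 0"
    unfolding X_def Y_def using assms by (auto intro: sum_nonneg)
  show ?thesis
  proof (cases "X = 0 \<or> Y = 0")
    case True
    then have "\<forall>i\<in>I. x i = 0 \<or> y i = 0"
      unfolding X_def Y_def using assms(1-3) by (auto simp: sum_nonneg_eq_0_iff)
    then have "(\<Sum>i\<in>I. x i powr \<theta> * y i powr (1 - \<theta>)) = 0"
      by (intro sum.neutral) auto
    with \<open>X \<ge> 0\<close> \<open>Y \<ge> 0\<close> show ?thesis unfolding X_def Y_def by simp
  next
    case False
    with \<open>X \<ge> 0\<close> \<open>Y \<ge> 0\<close> have "X > 0" "Y > 0" by auto
    have "(\<Sum>i\<in>I. (x i / X) powr \<theta> * (y i / Y) powr (1 - \<theta>))
          \<le> (\<Sum>i\<in>I. \<theta> * (x i / X) + (1 - \<theta>) * (y i / Y))"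
    proof (intro sum_mono)
      fix i assume "i \<in> I"
      show "(x i / X) powr \<theta> * (y i / Y) powr (1 - \<theta>) \<le> \<theta> * (x i / X) + (1 - \<theta>) * (y i / Y)"
      proof (cases "x i = 0 \<or> y i = 0")
        case True
        then show ?thesis
          using \<open>i \<in> I\<close> assms(2-5) \<open>X > 0\<close> \<open>Y > 0\<close> by auto
      next
        case False
        then show ?thesis
          using \<open>i \<in> I\<close> assms(2-5) \<open>X > 0\<close> \<open>Y > 0\<close>
          by (intro Youngs_inequality_0) (auto simp: less_le)
      qed
    qed
    also have "\<dots> = \<theta> * (X / X) + (1 - \<theta>) * (Y / Y)"
      unfolding X_def Y_def by (simp only: sum.distrib flip: sum_distrib_left sum_divide_distrib)
    also have "\<dots> = 1"
      using \<open>X > 0\<close> \<open>Y > 0\<close> by simp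
    also have "(\<Sum>i\<in>I. (x i / X) powr \<theta> * (y i / Y) powr (1 - \<theta>))
        = (\<Sum>i\<in>I. x i powr \<theta> * y i powr (1 - \<theta>)) / (X powr \<theta> * Y powr (1 - \<theta>))"
      unfolding sum_divide_distrib using assms(2,3) \<open>X > 0\<close> \<open>Y > 0\<close>
      by (intro sum.cong refl) (simp add: powr_divide)
    finally show ?thesis
      using \<open>X > 0\<close> \<open>Y > 0\<close> unfolding X_def Y_def by (simp add: divide_le_eq)
  qed
qed

lemma qform_log_convex:
  assumes "strict_mono lam" "\<forall>n\<in>{1..int N}. 0 \<le> t n" "0 < \<theta>" "\<theta> < 1"
  shows "qform (\<theta> * \<alpha>1 + (1 - \<theta>) * \<alpha>2) N lam t \<le> qform \<alpha>1 N lam t powr \<theta> * qform \<alpha>2 N lam t powr (1 - \<theta>)"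
proof -
  have t: "0 \<le> t m" "0 \<le> t n" if "(m, n) \<in> offdiag N" for m n
    using that assms(2) by (auto simp: offdiag_def)
  have "qform (\<theta> * \<alpha>1 + (1 - \<theta>) * \<alpha>2) N lam t
      = (\<Sum>(m, n)\<in>offdiag N. qterm \<alpha>1 lam t m n powr \<theta> * qterm \<alpha>2 lam t m n powr (1 - \<theta>))"
    unfolding qform_def using t by (intro sum.cong refl) (auto intro!: qterm_log_linear[OF assms(1)])
  also have "\<dots> \<le> qform \<alpha>1 N lam t powr \<theta> * qform \<alpha>2 N lam t powr (1 - \<theta>)"
    unfolding qform_def split_beta using t assms(3,4)
    by (intro Holder_ineq_sum) (auto intro!: qterm_nonneg)
  finally show ?thesis .
qed

lemma Cbar_log_convex:
  assumes "0 \<le> \<alpha>1" "\<alpha>1 \<le> 2" "0 \<le> \<alpha>2" "\<alpha>2 \<le> 2" "0 < \<theta>" "\<theta> < 1" "N \<ge> 1"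
  shows "Cbar (\<theta> * \<alpha>1 + (1 - \<theta>) * \<alpha>2) N \<le> Cbar \<alpha>1 N powr \<theta> * Cbar \<alpha>2 N powr (1 - \<theta>)"
proof (rule Cbar_le_admissible[OF _ assms(7)], unfold admissible_const_iff, intro allI impI)
  fix lam t :: "int \<Rightarrow> real"
  assume lam: "strict_mono lam" and t: "\<forall>n\<in>{1..int N}. 0 \<le> t n"
  let ?S = "sqnorm N t"
  have "qform (\<theta> * \<alpha>1 + (1 - \<theta>) * \<alpha>2) N lam t \<le> qform \<alpha>1 N lam t powr \<theta> * qform \<alpha>2 N lam t powr (1 - \<theta>)"
    by (rule qform_log_convex[OF lam t assms(5,6)])
  also have "\<dots> \<le> (Cbar \<alpha>1 N * ?S) powr \<theta> * (Cbar \<alpha>2 N * ?S) powr (1 - \<theta>)"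
    using Cbar_admissible[of \<alpha>1 N] Cbar_admissible[of \<alpha>2 N] assms lam t qform_nonneg[OF t]
    unfolding admissible_const_iff by (intro mult_mono powr_mono2) auto
  also have "\<dots> = Cbar \<alpha>1 N powr \<theta> * Cbar \<alpha>2 N powr (1 - \<theta>) * (?S powr \<theta> * ?S powr (1 - \<theta>))"
    using Cbar_nonneg[of \<alpha>1 N] Cbar_nonneg[of \<alpha>2 N] assms sqnorm_nonneg[of N t]
    by (simp add: powr_mult)
  also have "?S powr \<theta> * ?S powr (1 - \<theta>) = ?S"
    using sqnorm_nonneg[of N t] by (simp flip: powr_add)
  finally show "qform (\<theta> * \<alpha>1 + (1 - \<theta>) * \<alpha>2) N lam t
      \<le> Cbar \<alpha>1 N powr \<theta> * Cbar \<alpha>2 N powr (1 - \<theta>) * ?S" .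
qed

text \<open>\<open>\<alpha>2\<close> is a convex combination of \<open>\<alpha>1\<close> and \<open>2 - \<alpha>1\<close>, where \<^const>\<open>Cbar\<close> takes the same value.\<close>
lemma Cbar_antimono:
  assumes "0 \<le> \<alpha>1" "\<alpha>1 < \<alpha>2" "\<alpha>2 \<le> 1" "N \<ge> 1"
  shows "Cbar \<alpha>2 N \<le> Cbar \<alpha>1 N"
proof -
  define \<theta> where "\<theta> = (2 - \<alpha>1 - \<alpha>2) / (2 - 2 * \<alpha>1)"
  have "0 < \<theta>" "\<theta> < 1"
    unfolding \<theta>_def using assms by (auto simp: divide_simps)
  have "2 - 2 * \<alpha>1 \<noteq> 0"
    using assms by simp
  then have "\<theta> * \<alpha>1 + (1 - \<theta>) * (2 - \<alpha>1) = \<alpha>2"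
    unfolding \<theta>_def by (simp add: divide_simps) algebra
  then have "Cbar \<alpha>2 N \<le> Cbar \<alpha>1 N powr \<theta> * Cbar (2 - \<alpha>1) N powr (1 - \<theta>)"
    using Cbar_log_convex[of \<alpha>1 "2 - \<alpha>1" \<theta> N] assms \<open>0 < \<theta>\<close> \<open>\<theta> < 1\<close> by auto
  also have "\<dots> = Cbar \<alpha>1 N"
    using Cbar_nonneg[of \<alpha>1 N] assms by (simp add: Cbar_reflect flip: powr_add)
  finally show ?thesis .
qed

text \<open>Unit spacing up to \<open>N - 1\<close>, then spacing \<open>N\<close> from \<open>\<lambda>\<^sub>N = 2N - 1\<close> on: the point \<open>N\<close> has
  gap \<open>N\<close> yet lies within distance \<open>2N\<close> of the \<open>N - 1\<close> points before it.\<close>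
definition spread_seq :: "nat \<Rightarrow> int \<Rightarrow> real" where
  "spread_seq N k = of_int (if k < int N then k else int N * (k - int N + 2) - 1)"

lemma strict_mono_spread_seq:
  assumes "N \<ge> 1"
  shows "strict_mono (spread_seq N)"
proof (rule strict_monoI)
  fix x y :: int
  assume "x < y"
  consider "y < int N" | "x < int N" "int N \<le> y" | "int N \<le> x"
    by linarith
  then show "spread_seq N x < spread_seq N y"
  proof cases
    case 1
    with \<open>x < y\<close> show ?thesis unfolding spread_seq_def by simp
  next
    case 2
    have "int N * 2 \<le> int N * (y - int N + 2)"
      using 2 by (intro mult_left_mono) auto
    then have "x < int N * (y - int N + 2) - 1"
      using 2 assms by linarith
    with 2 show ?thesis unfolding spread_seq_def of_int_less_iff by simp
  next
    case 3
    have "int N * (x - int N + 2) < int N * (y - int N + 2)"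
      using 3 \<open>x < y\<close> assms by (intro mult_strict_left_mono) auto
    with 3 \<open>x < y\<close> show ?thesis unfolding spread_seq_def of_int_less_iff by simp
  qed
qed

lemma gap_spread_seq_N: "gap (spread_seq N) (int N) = real N"
  unfolding gap_def spread_seq_def by simp

lemma gap_spread_seq_less_N:
  assumes "N \<ge> 1" "n < int N"
  shows "gap (spread_seq N) n = 1"
proof (cases "n + 1 < int N")
  case True
  then show ?thesis unfolding gap_def spread_seq_def by simp
next
  case False
  with assms have "n = int N - 1" by simp
  with assms show ?thesis unfolding gap_def spread_seq_def by (simp add: min_def)
qed

lemma qterm_spread_seq_ge:
  assumes "1 \<le> n" "n < int N" "t (int N) = sqrt (real N)" "t n = 1"
  shows "real N powr (1/2 - \<alpha>) / 4 \<le> qterm \<alpha> (spread_seq N) t (int N) n"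
proof -
  define d where "d = spread_seq N (int N) - spread_seq N n"
  have "N \<ge> 1" "real N \<ge> 1" using assms by simp_all
  have "d = real (2 * N - 1) - of_int n"
    unfolding d_def spread_seq_def using assms by auto
  then have "0 < d" "d \<le> 2 * real N"
    using assms by auto
  then have "0 < d\<^sup>2" "d\<^sup>2 \<le> (2 * real N)\<^sup>2"
    by (simp, intro power_mono) auto
  have "real N powr (1/2 - \<alpha>) / 4 = real N powr (2 - \<alpha>) * sqrt (real N) / (2 * real N)\<^sup>2"
    using \<open>real N \<ge> 1\<close>
    by (simp add: powr_add powr_diff powr_half_sqrt[symmetric] power2_eq_square powr_realpow[symmetric])
  also have "\<dots> \<le> real N powr (2 - \<alpha>) * sqrt (real N) / d\<^sup>2"
    using \<open>0 < d\<^sup>2\<close> \<open>d\<^sup>2 \<le> (2 * real N)\<^sup>2\<close> \<open>real N \<ge> 1\<close> by (intro divide_left_mono) auto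
  also have "\<dots> = qterm \<alpha> (spread_seq N) t (int N) n"
    unfolding qterm_def d_def gap_spread_seq_N gap_spread_seq_less_N[OF \<open>N \<ge> 1\<close> assms(2)]
    using assms by simp
  finally show ?thesis .
qed

lemma Cbar_ge_powr:
  assumes "0 \<le> \<alpha>" "\<alpha> \<le> 2" "N \<ge> 2"
  shows "real N powr (1/2 - \<alpha>) / 16 \<le> Cbar \<alpha> N"
proof -
  define t :: "int \<Rightarrow> real" where "t = (\<lambda>n. if n < int N then 1 else sqrt (real N))"
  define P where "P = real N powr (1/2 - \<alpha>)"
  let ?B = "{1..int N} - {int N}"
  have t_nonneg: "0 \<le> t n" for n
    unfolding t_def by simp
  have "(real N - 1) * (P / 4) = (\<Sum>n\<in>?B. P / 4)"
    using assms(3) by (simp add: card_Diff_singleton)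
  also have "\<dots> \<le> (\<Sum>n\<in>?B. qterm \<alpha> (spread_seq N) t (int N) n)"
    unfolding P_def by (intro sum_mono qterm_spread_seq_ge) (auto simp: t_def)
  also have "\<dots> = (\<Sum>(m, n)\<in>{int N} \<times> ?B. qterm \<alpha> (spread_seq N) t m n)"
    by (subst sum.Sigma[symmetric]) auto
  also have "\<dots> \<le> qform \<alpha> N (spread_seq N) t"
    unfolding qform_def offdiag_def using assms(3)
    by (intro sum_mono2) (auto intro!: qterm_nonneg t_nonneg)
  also have "\<dots> \<le> Cbar \<alpha> N * sqnorm N t"
    using Cbar_admissible[OF assms(1,2)] strict_mono_spread_seq assms(3)
    unfolding admissible_const_iff by (simp add: t_nonneg)
  also have "sqnorm N t = (t (int N))\<^sup>2 + (\<Sum>n\<in>?B. (t n)\<^sup>2)"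
    unfolding sqnorm_def using assms(3) by (subst sum.remove[of _ "int N"]) auto
  also have "\<dots> = 2 * real N - 1"
    using assms(3) by (simp add: t_def card_Diff_singleton)
  finally have "(real N - 1) * (P / 4) \<le> Cbar \<alpha> N * (2 * real N - 1)" .
  moreover have "P / 16 * (2 * real N - 1) \<le> (real N - 1) * (P / 4)"
    using assms(3) by (simp add: P_def field_simps)
  ultimately have "P / 16 * (2 * real N - 1) \<le> Cbar \<alpha> N * (2 * real N - 1)"
    by linarith
  then show ?thesis
    unfolding P_def by (rule mult_right_le_imp_le) (use assms(3) in simp)
qed

theorem proposition3:
  shows "(\<forall>(\<alpha>::real) (N::nat). 0 \<le> \<alpha> \<and> \<alpha> \<le> 2 \<and> N \<ge> 2 \<longrightarrow>
            Cbar \<alpha> N = Cbar (2 - \<alpha>) N \<and> Cbar \<alpha> N \<ge> 1)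
       \<and> (\<forall>(\<alpha>1::real) \<alpha>2 \<theta> (N::nat). 0 \<le> \<alpha>1 \<and> \<alpha>1 < \<alpha>2 \<and> \<alpha>2 \<le> 2 \<and> 0 < \<theta> \<and> \<theta> < 1 \<and> N \<ge> 1 \<longrightarrow>
            Cbar (\<theta> * \<alpha>1 + (1 - \<theta>) * \<alpha>2) N \<le> Cbar \<alpha>1 N powr \<theta> * Cbar \<alpha>2 N powr (1 - \<theta>))
       \<and> (\<forall>(\<alpha>1::real) \<alpha>2 (N::nat). 0 \<le> \<alpha>1 \<and> \<alpha>1 < \<alpha>2 \<and> \<alpha>2 \<le> 1 \<and> N \<ge> 1 \<longrightarrow>
            Cbar \<alpha>1 N \<ge> Cbar \<alpha>2 N)
       \<and> (\<forall>\<alpha>::real. 0 \<le> \<alpha> \<and> \<alpha> < 1/2 \<longrightarrow>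
            (\<exists>c>0. \<forall>N::nat. N \<ge> 2 \<longrightarrow> Cbar \<alpha> N \<ge> c * real N powr (1/2 - \<alpha>)))"
proof (intro conjI allI impI)
  fix \<alpha> :: real and N :: nat
  assume "0 \<le> \<alpha> \<and> \<alpha> \<le> 2 \<and> N \<ge> 2"
  then show "Cbar \<alpha> N = Cbar (2 - \<alpha>) N" and "Cbar \<alpha> N \<ge> 1"
    by (simp_all add: Cbar_reflect Cbar_ge_one)
next
  fix \<alpha>1 \<alpha>2 \<theta> :: real and N :: nat
  assume "0 \<le> \<alpha>1 \<and> \<alpha>1 < \<alpha>2 \<and> \<alpha>2 \<le> 2 \<and> 0 < \<theta> \<and> \<theta> < 1 \<and> N \<ge> 1"
  then show "Cbar (\<theta> * \<alpha>1 + (1 - \<theta>) * \<alpha>2) N \<le> Cbar \<alpha>1 N powr \<theta> * Cbar \<alpha>2 N powr (1 - \<theta>)"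
    by (intro Cbar_log_convex) auto
next
  fix \<alpha>1 \<alpha>2 :: real and N :: nat
  assume "0 \<le> \<alpha>1 \<and> \<alpha>1 < \<alpha>2 \<and> \<alpha>2 \<le> 1 \<and> N \<ge> 1"
  then show "Cbar \<alpha>1 N \<ge> Cbar \<alpha>2 N"
    by (intro Cbar_antimono) auto
next
  fix \<alpha> :: real
  assume "0 \<le> \<alpha> \<and> \<alpha> < 1/2"
  then show "\<exists>c>0. \<forall>N::nat. N \<ge> 2 \<longrightarrow> Cbar \<alpha> N \<ge> c * real N powr (1/2 - \<alpha>)"
    using Cbar_ge_powr by (intro exI[of _ "1/16"]) auto
qed

end
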